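(* Let $n,r$ be integers with $n\ge r+2\ge 2$, let $\sigma\colon\{1,\dots,r\}\to\{1,\dots,n-1\}$ be injective, and let $\Delta'=(x^{(\sigma(1))}_1,\dots,x^{(\sigma(r))}_r)$. There is a constant $C>0$ such that for every $w$ in the commutator subgroup $[F_r,F_r]$ of $F_r=F(t_1,\dots,t_r)$, $$\mathrm{Area}\big(w(\Delta)\,w(\Delta')^{-1}\big)\le C\cdot|w|^2.$$
   Context: For $\alpha\in\{1,\dots,n\}$ let $F^{(\alpha)}$ be the free group on $a^{(\alpha)}_1,\dots,a^{(\alpha)}_r$, let $\psi\colon F^{(1)}\times\cdots\times F^{(n)}\to\mathbb Z^r$ send each $a^{(\alpha)}_j$ to $e_j$, and $K=\ker\psi$. For $\alpha\in\{1,\dots,n-1\}$, $j\in\{1,\dots,r\}$, $x^{(\alpha)}_j=a^{(\alpha)}_j(a^{(n)}_j)^{-1}$; $X$ is the set of all $x^{(\alpha)}_j$ and $F(X)$ the abstract free group on it; $\Delta=(x^{(1)}_1,x^{(2)}_2,\dots,x^{(r)}_r)$. For $w\in F_r=F(t_1,\dots,t_r)$ and a tuple $S=(s_1,\dots,s_r)$ of elements of $F(X)$, $w(S)\in F(X)$ is the image of $w$ under $t_i\mapsto s_i$; $|w|$ is the word length of $w$ in $F_r$. $[g,h]=ghg^{-1}h^{-1}$. Let $\mathcal R=\mathcal R_1\cup\mathcal R_2$ with $\mathcal R_1=\{[x^{(\alpha)}_i,x^{(\beta)}_i]:\alpha\ne\beta\}$, $\mathcal R_2=\{[x^{(\alpha)}_i,x^{(\beta)}_j(x^{(\gamma)}_j)^{-1}]: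 i\neq j,\ \alpha,\beta,\gamma\in\{1,\dots,n-1\}\text{ pairwise distinct}\}$, a set of defining relators for $K$ on $X$. $\mathrm{Area}(u)$ for $u\in F(X)$ is the least number of conjugates of elements of $\mathcal R^{\pm1}$ whose product equals $u$ in $F(X)$. *)

theory Defs
  imports "HOL-Library.Extended_Real"
begin

text \<open>Words in a free group: lists of letters (b, a), where b = True means
 the generator a and b = False means its inverse.\<close>

type_synonym 'a word = "(bool \<times> 'a) list"

fun cancels :: "bool \<times> 'a \<Rightarrow> bool \<times> 'a \<Rightarrow> bool" where
  "cancels (b, a) (c, d) \<longleftrightarrow> (a = d \<and> b \<noteq> c)"

fun reduce :: "'a word \<Rightarrow> 'a word" where
  "reduce [] = []"
| "reduce (x # xs) = (case reduce xs of [] \<Rightarrow> [x]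
      | y # ys \<Rightarrow> (if cancels x y then ys else x # y # ys))"

definition inv_word :: "'a word \<Rightarrow> 'a word" where
  "inv_word w = rev (map (\<lambda>(b, a). (\<not> b, a)) w)"

definition words_over :: "'a set \<Rightarrow> 'a word set" where
  "words_over A = {w. \<forall>x \<in> set w. snd x \<in> A}"

definition gen :: "'a \<Rightarrow> 'a word" where
  "gen a = [(True, a)]"

definition commw :: "'a word \<Rightarrow> 'a word \<Rightarrow> 'a word" where
  "commw g h = g @ h @ inv_word g @ inv_word h"

definition word_length :: "'a word \<Rightarrow> nat" where
  "word_length w = length (reduce w)"

definition subst :: "('a \<Rightarrow> 'b word) \<Rightarrow> 'a word \<Rightarrow> 'b word" where
  "subst s w = concat (map (\<lambda>(b, a). if b then s a else inv_word (s a)) w)"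

inductive comm_prod :: "nat \<Rightarrow> nat word \<Rightarrow> bool" for r where
  empty: "comm_prod r []"
| step: "comm_prod r c \<Longrightarrow> u \<in> words_over {1..r} \<Longrightarrow> v \<in> words_over {1..r}
          \<Longrightarrow> comm_prod r (c @ commw u v)"

text \<open>The commutator subgroup [F_r,F_r] (generated by commutators; since the inverse of a
 commutator is a commutator, its elements are the products of commutators).\<close>
definition commutator_subgroup :: "nat \<Rightarrow> nat word set" where
  "commutator_subgroup r = {w \<in> words_over {1..r}. \<exists>c. comm_prod r c \<and> reduce w = reduce c}"

text \<open>Generators x^{(alpha)}_j are the pairs (alpha, j).\<close>
definition Xset :: "nat \<Rightarrow> nat \<Rightarrow> (nat \<times> nat) set" where
  "Xset n r = {1..n-1} \<times> {1..r}"

definition x :: "nat \<Rightarrow> nat \<Rightarrow> (nat \<times> nat) word" where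
  "x \<alpha> j = gen (\<alpha>, j)"

definition R1 :: "nat \<Rightarrow> nat \<Rightarrow> (nat \<times> nat) word set" where
  "R1 n r = {commw (x \<alpha> i) (x \<beta> i) | \<alpha> \<beta> i.
      \<alpha> \<in> {1..n-1} \<and> \<beta> \<in> {1..n-1} \<and> i \<in> {1..r} \<and> \<alpha> \<noteq> \<beta>}"

definition R2 :: "nat \<Rightarrow> nat \<Rightarrow> (nat \<times> nat) word set" where
  "R2 n r = {commw (x \<alpha> i) (x \<beta> j @ inv_word (x \<gamma> j)) | \<alpha> \<beta> \<gamma> i j.
      \<alpha> \<in> {1..n-1} \<and> \<beta> \<in> {1..n-1} \<and> \<gamma> \<in> {1..n-1} \<and> i \<in> {1..r} \<and> j \<in> {1..r}
      \<and> i \<noteq> j \<and> \<alpha> \<noteq> \<beta> \<and> \<alpha> \<noteq> \<gamma> \<and> \<beta> \<noteq> \<gamma>}"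

definition Rel :: "nat \<Rightarrow> nat \<Rightarrow> (nat \<times> nat) word set" where
  "Rel n r = R1 n r \<union> R2 n r"

definition conj_rel :: "nat \<Rightarrow> nat \<Rightarrow> (nat \<times> nat) word \<Rightarrow> bool" where
  "conj_rel n r c \<longleftrightarrow> (\<exists>g \<rho>. g \<in> words_over (Xset n r) \<and>
      (\<rho> \<in> Rel n r \<or> inv_word \<rho> \<in> Rel n r) \<and> c = g @ \<rho> @ inv_word g)"

text \<open>Area: least number of such conjugates whose product equals u in F(X)
 (infinity if there is none).\<close>
definition Area :: "nat \<Rightarrow> nat \<Rightarrow> (nat \<times> nat) word \<Rightarrow> ereal" where
  "Area n r u = Inf {ereal (real (length cs)) | cs.
      (\<forall>c \<in> set cs. conj_rel n r c) \<and> reduce u = reduce (concat cs)}"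

end

theory Submission
  imports Defs
begin

text \<open>
  For injective \<tau> write \<Delta>_\<tau> = (x^(\<tau> 1)_1, ..., x^(\<tau> r)_r). Replacing the entry x^\<alpha>_j of
  \<Delta>_\<tau> by x^\<beta>_j, for an index \<beta> not used by \<tau>, multiplies it by d = x^\<beta>_j (x^\<alpha>_j)^-1,
  and d commutes with every entry of \<Delta>_\<tau> by a single relator (from R1 for the j-th entry,
  from R2 for the others). Pushing the resulting copies of d through w letter by letter costs at
  most |w|^2 relators and leaves d^e at the end, where e is the exponent sum of t_j in w; for w in
  [F_r, F_r] this is e = 0. Since n - 1 > r, an unused index always exists, so \<Delta> is turned into
  \<Delta>' by at most 2r such moves, and C = 2r + 1 works.
\<close>

section \<open>Words in a free group\<close>

fun cancel_cons :: "bool \<times> 'a \<Rightarrow> 'a word \<Rightarrow> 'a word" where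
  "cancel_cons p [] = [p]"
| "cancel_cons p (y # ys) = (if cancels p y then ys else p # y # ys)"

lemma reduce_Cons [simp]: "reduce (p # xs) = cancel_cons p (reduce xs)"
  by (cases "reduce xs") auto

declare reduce.simps(2) [simp del]

fun reduced :: "'a word \<Rightarrow> bool" where
  "reduced [] = True"
| "reduced [p] = True"
| "reduced (p # q # l) = (\<not> cancels p q \<and> reduced (q # l))"

lemma reduced_Cons_tl: "reduced (p # l) \<Longrightarrow> reduced l"
  by (cases l) auto

lemma cancels_cancels_eq: "cancels p y \<Longrightarrow> cancels y q \<Longrightarrow> p = q"
  by (cases p; cases y; cases q) auto

lemma cancels_sym: "cancels p y \<Longrightarrow> cancels y p"
  by (cases p; cases y) auto

lemma reduced_cancel_cons: "reduced L \<Longrightarrow> reduced (cancel_cons p L)"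
  by (cases L rule: reduced.cases) (auto intro: reduced_Cons_tl)

lemma reduced_reduce: "reduced (reduce xs)"
  by (induction xs) (auto simp: reduced_cancel_cons)

lemma cancel_cons_cancel_cons:
  assumes "reduced L" and "cancels p y"
  shows "cancel_cons p (cancel_cons y L) = L"
proof (cases L)
  case (Cons q zs)
  show ?thesis
  proof (cases "cancels y q")
    case True
    then have "p = q" using assms(2) cancels_cancels_eq by blast
    moreover have "zs = u # us \<Longrightarrow> \<not> cancels q u" for u us
      using assms(1) Cons by simp
    ultimately show ?thesis using Cons True by (cases zs) auto
  qed (use Cons assms(2) in simp)
qed (use assms(2) in \<open>auto simp: cancels_sym\<close>)

lemma reduce_append: "reduce (xs @ ys) = foldr cancel_cons xs (reduce ys)"
  by (induction xs) auto

lemma reduced_foldr_cancel_cons: "reduced L \<Longrightarrow> reduced (foldr cancel_cons xs L)"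
  by (induction xs) (auto simp: reduced_cancel_cons)

lemma foldr_cancel_cons_cancel_cons:
  assumes "reduced L"
  shows "foldr cancel_cons (cancel_cons p R) L = cancel_cons p (foldr cancel_cons R L)"
proof (cases R)
  case (Cons y ys)
  have "reduced (foldr cancel_cons ys L)"
    using assms by (rule reduced_foldr_cancel_cons)
  with Cons show ?thesis
    by (cases "cancels p y") (simp_all add: cancel_cons_cancel_cons)
qed simp

lemma foldr_cancel_cons_reduce:
  "reduced L \<Longrightarrow> foldr cancel_cons (reduce xs) L = foldr cancel_cons xs L"
  by (induction xs)
    (auto simp: foldr_cancel_cons_cancel_cons reduced_reduce)

lemma reduce_reduce: "reduce (reduce xs) = reduce xs"
  using reduce_append[of xs "[]"] reduce_append[of "reduce xs" "[]"]
    foldr_cancel_cons_reduce[of "[]" xs] by simp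

lemma reduce_append_reduce_left: "reduce (reduce xs @ ys) = reduce (xs @ ys)"
  by (simp add: reduce_append foldr_cancel_cons_reduce reduced_reduce)

lemma reduce_append_reduce_right: "reduce (xs @ reduce ys) = reduce (xs @ ys)"
  by (simp add: reduce_append reduce_reduce)

definition free_eq :: "'a word \<Rightarrow> 'a word \<Rightarrow> bool" (infix "\<approx>" 50) where
  "u \<approx> v \<longleftrightarrow> reduce u = reduce v"

lemma free_eq_refl [simp]: "u \<approx> u"
  by (simp add: free_eq_def)

lemma free_eq_sym: "u \<approx> v \<Longrightarrow> v \<approx> u"
  by (simp add: free_eq_def)

lemma free_eq_commute: "u \<approx> v \<longleftrightarrow> v \<approx> u"
  by (auto simp: free_eq_def)

lemma free_eq_trans [trans]: "u \<approx> v \<Longrightarrow> v \<approx> w \<Longrightarrow> u \<approx> w"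
  by (simp add: free_eq_def)

lemma free_eq_append: "u \<approx> u' \<Longrightarrow> v \<approx> v' \<Longrightarrow> u @ v \<approx> u' @ v'"
  unfolding free_eq_def by (metis reduce_append_reduce_left reduce_append_reduce_right)

lemma inv_word_Nil [simp]: "inv_word [] = []"
  by (simp add: inv_word_def)

lemma inv_word_Cons: "inv_word (p # u) = inv_word u @ [(\<not> fst p, snd p)]"
  by (cases p) (simp add: inv_word_def)

lemma inv_word_append [simp]: "inv_word (u @ v) = inv_word v @ inv_word u"
  by (simp add: inv_word_def)

lemma inv_word_inv_word [simp]: "inv_word (inv_word u) = u"
  by (simp add: inv_word_def case_prod_unfold comp_def rev_map)

lemma inv_word_concat: "inv_word (concat cs) = concat (rev (map inv_word cs))"
  by (induction cs) auto

lemma append_inv_word_free_eq_Nil: "u @ inv_word u \<approx> []"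
proof (induction u)
  case (Cons p u)
  let ?p' = "(\<not> fst p, snd p)"
  have "(p # u) @ inv_word (p # u) \<approx> [p] @ (u @ inv_word u) @ [?p']"
    by (simp add: inv_word_Cons)
  also have "\<dots> \<approx> [p] @ [] @ [?p']"
    using Cons.IH by (intro free_eq_append free_eq_refl)
  also have "\<dots> \<approx> []"
    by (cases p) (simp add: free_eq_def)
  finally show ?case .
qed simp

lemma free_eq_cancel: "a @ g @ inv_word g @ b \<approx> a @ b"
  using free_eq_append[OF free_eq_refl[of a] free_eq_append[OF append_inv_word_free_eq_Nil[of g]
    free_eq_refl[of b]]] by simp

lemma free_eq_cancel': "a @ inv_word g @ g @ b \<approx> a @ b"
  using free_eq_cancel[of a "inv_word g" b] by simp

lemma commw_append_inv_word_free_eq: "commw a (b @ inv_word a) \<approx> commw a b"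
proof -
  have "commw a (b @ inv_word a) = (a @ b @ inv_word a) @ inv_word a @ a @ inv_word b"
    by (simp add: commw_def)
  also have "\<dots> \<approx> (a @ b @ inv_word a) @ inv_word b"
    by (rule free_eq_cancel')
  finally show ?thesis
    by (simp add: commw_def)
qed

lemma free_eq_inv_word: "u \<approx> v \<Longrightarrow> inv_word u \<approx> inv_word v"
proof -
  assume "u \<approx> v"
  have "inv_word u \<approx> inv_word u @ v @ inv_word v @ []"
    using free_eq_cancel[of "inv_word u" v "[]"] by (simp add: free_eq_commute)
  also have "\<dots> \<approx> inv_word u @ u @ inv_word v @ []"
    using free_eq_sym[OF \<open>u \<approx> v\<close>] by (intro free_eq_append free_eq_refl)
  also have "\<dots> \<approx> [] @ inv_word v"
    using free_eq_cancel'[of "[]" u "inv_word v"] by simp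
  finally show ?thesis by simp
qed

lemma free_eq_conj_concat:
  "g @ concat cs @ inv_word g \<approx> concat (map (\<lambda>c. g @ c @ inv_word g) cs)"
proof (induction cs)
  case Nil
  show ?case using append_inv_word_free_eq_Nil[of g] by simp
next
  case (Cons c cs)
  have "g @ concat (c # cs) @ inv_word g \<approx> (g @ c) @ inv_word g @ g @ (concat cs @ inv_word g)"
    using free_eq_cancel'[of "g @ c" g "concat cs @ inv_word g"] by (simp add: free_eq_commute)
  also have "\<dots> \<approx> (g @ c @ inv_word g) @ concat (map (\<lambda>c. g @ c @ inv_word g) cs)"
    using Cons.IH by (simp add: free_eq_append)
  finally show ?case by simp
qed

definition subst_letter :: "('a \<Rightarrow> 'b word) \<Rightarrow> bool \<times> 'a \<Rightarrow> 'b word" where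
  "subst_letter s p = (if fst p then s (snd p) else inv_word (s (snd p)))"

lemma subst_Nil [simp]: "subst s [] = []"
  by (simp add: subst_def)

lemma subst_Cons [simp]: "subst s (p # w) = subst_letter s p @ subst s w"
  by (cases p) (simp add: subst_def subst_letter_def)

lemma subst_append [simp]: "subst s (u @ v) = subst s u @ subst s v"
  by (simp add: subst_def)

lemma subst_cong: "(\<And>a. a \<in> snd ` set w \<Longrightarrow> s a = s' a) \<Longrightarrow> subst s w = subst s' w"
  by (induction w) (auto simp: subst_letter_def)

lemma subst_cong_free_eq:
  "(\<And>a. a \<in> snd ` set w \<Longrightarrow> s a \<approx> s' a) \<Longrightarrow> subst s w \<approx> subst s' w"
proof (induction w)
  case (Cons p w)
  have "subst_letter s p \<approx> subst_letter s' p"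
    using Cons.prems[of "snd p"] by (auto simp: subst_letter_def intro: free_eq_inv_word)
  with Cons show ?case by (auto intro: free_eq_append)
qed simp

lemma subst_cancel_cons_free_eq: "subst s (cancel_cons p L) \<approx> subst_letter s p @ subst s L"
proof (cases L)
  case (Cons y ys)
  show ?thesis
  proof (cases "cancels p y")
    case True
    obtain b a where p: "p = (b, a)" and y: "y = (\<not> b, a)"
      using True by (cases p; cases y) auto
    have "subst_letter s p @ subst_letter s y @ subst s ys \<approx> subst s ys"
      using free_eq_cancel[of "[]" "s a"] free_eq_cancel'[of "[]" "s a"]
      by (cases b) (simp_all add: p y subst_letter_def)
    with Cons True show ?thesis by (simp add: free_eq_commute)
  qed (use Cons in simp)
qed simp

lemma subst_reduce_free_eq: "subst s (reduce w) \<approx> subst s w"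
proof (induction w)
  case (Cons p w)
  have "subst s (reduce (p # w)) \<approx> subst_letter s p @ subst s (reduce w)"
    by (simp add: subst_cancel_cons_free_eq)
  also have "\<dots> \<approx> subst_letter s p @ subst s w"
    using Cons.IH by (rule free_eq_append[OF free_eq_refl])
  finally show ?case by simp
qed simp

lemma words_over_Nil [simp]: "[] \<in> words_over A"
  by (simp add: words_over_def)

lemma words_over_Cons [simp]: "p # u \<in> words_over A \<longleftrightarrow> snd p \<in> A \<and> u \<in> words_over A"
  by (auto simp: words_over_def)

lemma words_over_append [simp]: "u @ v \<in> words_over A \<longleftrightarrow> u \<in> words_over A \<and> v \<in> words_over A"
  by (auto simp: words_over_def)

lemma words_over_inv_word [simp]: "inv_word u \<in> words_over A \<longleftrightarrow> u \<in> words_over A"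
  by (auto simp: words_over_def inv_word_def)

lemma set_cancel_cons: "set (cancel_cons p L) \<subseteq> insert p (set L)"
  by (cases L) auto

lemma set_reduce: "set (reduce w) \<subseteq> set w"
proof (induction w)
  case (Cons p w)
  have "set (reduce (p # w)) \<subseteq> insert p (set (reduce w))"
    using set_cancel_cons by simp
  with Cons.IH show ?case by auto
qed simp

lemma words_over_reduce: "w \<in> words_over A \<Longrightarrow> reduce w \<in> words_over A"
  using set_reduce by (fastforce simp: words_over_def)

definition exp_sum :: "'a \<Rightarrow> 'a word \<Rightarrow> int" where
  "exp_sum a w = (\<Sum>p \<leftarrow> w. if snd p = a then (if fst p then 1 else -1) else 0)"

lemma exp_sum_Nil [simp]: "exp_sum a [] = 0"
  by (simp add: exp_sum_def)

lemma exp_sum_Cons: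
  "exp_sum a (p # w) = (if snd p = a then (if fst p then 1 else -1) else 0) + exp_sum a w"
  by (simp add: exp_sum_def)

lemma exp_sum_append [simp]: "exp_sum a (u @ v) = exp_sum a u + exp_sum a v"
  by (simp add: exp_sum_def)

lemma exp_sum_inv_word [simp]: "exp_sum a (inv_word u) = - exp_sum a u"
  by (induction u) (auto simp: inv_word_Cons exp_sum_Cons)

lemma exp_sum_cancel_cons: "exp_sum a (cancel_cons p L) = exp_sum a (p # L)"
proof (cases L)
  case (Cons y ys)
  then show ?thesis by (cases p; cases y) (auto simp: exp_sum_Cons)
qed simp

lemma exp_sum_reduce: "exp_sum a (reduce w) = exp_sum a w"
  by (induction w) (simp_all add: exp_sum_cancel_cons exp_sum_Cons)

lemma exp_sum_comm_prod: "comm_prod r c \<Longrightarrow> exp_sum a c = 0"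
  by (induction rule: comm_prod.induct) (auto simp: commw_def)

lemma exp_sum_commutator_subgroup: "w \<in> commutator_subgroup r \<Longrightarrow> exp_sum a w = 0"
proof -
  assume "w \<in> commutator_subgroup r"
  then obtain c where "comm_prod r c" and "reduce w = reduce c"
    unfolding commutator_subgroup_def by blast
  then show ?thesis by (metis exp_sum_comm_prod exp_sum_reduce)
qed

section \<open>Area in a group presentation\<close>

locale group_presentation =
  fixes A :: "'a set" and R :: "'a word set"
begin

definition relator_conj :: "'a word \<Rightarrow> bool" where
  "relator_conj c \<longleftrightarrow>
    (\<exists>g \<rho>. g \<in> words_over A \<and> (\<rho> \<in> R \<or> inv_word \<rho> \<in> R) \<and> c = g @ \<rho> @ inv_word g)"

lemma relator_conj_conj:
  assumes "g \<in> words_over A" and "relator_conj c"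
  shows "relator_conj (g @ c @ inv_word g)"
proof -
  obtain h \<rho> where "h \<in> words_over A" "\<rho> \<in> R \<or> inv_word \<rho> \<in> R" "c = h @ \<rho> @ inv_word h"
    using assms(2) unfolding relator_conj_def by blast
  with assms(1) show ?thesis
    unfolding relator_conj_def by (intro exI[of _ "g @ h"] exI[of _ \<rho>]) simp
qed

lemma relator_conj_inv_word: "relator_conj c \<Longrightarrow> relator_conj (inv_word c)"
  unfolding relator_conj_def by (metis append_assoc inv_word_append inv_word_inv_word)

definition area_le :: "nat \<Rightarrow> 'a word \<Rightarrow> bool" where
  "area_le k u \<longleftrightarrow> (\<exists>cs. length cs \<le> k \<and> (\<forall>c \<in> set cs. relator_conj c) \<and> u \<approx> concat cs)"

lemma area_le_free_eq: "area_le k u \<Longrightarrow> u \<approx> v \<Longrightarrow> area_le k v"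
  unfolding area_le_def by (meson free_eq_sym free_eq_trans)

lemma area_le_mono: "area_le k u \<Longrightarrow> k \<le> m \<Longrightarrow> area_le m u"
  unfolding area_le_def by (meson order_trans)

lemma area_le_Nil: "area_le 0 []"
  unfolding area_le_def by (intro exI[of _ "[]"]) simp

lemma area_le_relator: "\<rho> \<in> R \<Longrightarrow> area_le 1 \<rho>"
  unfolding area_le_def relator_conj_def
  by (intro exI[of _ "[\<rho>]"]) (auto intro: exI[of _ "[]"])

lemma area_le_append:
  assumes "area_le k u" and "area_le m v"
  shows "area_le (k + m) (u @ v)"
proof -
  obtain cs ds where "length cs \<le> k" "\<forall>c \<in> set cs. relator_conj c" "u \<approx> concat cs"
    and "length ds \<le> m" "\<forall>c \<in> set ds. relator_conj c" "v \<approx> concat ds"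
    using assms unfolding area_le_def by blast
  then show ?thesis
    unfolding area_le_def by (intro exI[of _ "cs @ ds"]) (auto intro: free_eq_append)
qed

lemma area_le_conj:
  assumes g: "g \<in> words_over A" and "area_le k u"
  shows "area_le k (g @ u @ inv_word g)"
proof -
  obtain cs where "length cs \<le> k" and cs: "\<forall>c \<in> set cs. relator_conj c" and "u \<approx> concat cs"
    using assms(2) unfolding area_le_def by blast
  moreover have "g @ u @ inv_word g \<approx> g @ concat cs @ inv_word g"
    using \<open>u \<approx> concat cs\<close> by (simp add: free_eq_append)
  ultimately show ?thesis
    unfolding area_le_def using relator_conj_conj[OF g] free_eq_conj_concat[of g cs]
    by (intro exI[of _ "map (\<lambda>c. g @ c @ inv_word g) cs"]) (auto intro: free_eq_trans)
qed

lemma area_le_inv_word: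
  assumes "area_le k u"
  shows "area_le k (inv_word u)"
proof -
  obtain cs where "length cs \<le> k" "\<forall>c \<in> set cs. relator_conj c" "u \<approx> concat cs"
    using assms unfolding area_le_def by blast
  then show ?thesis
    unfolding area_le_def
    by (intro exI[of _ "rev (map inv_word cs)"])
      (auto simp: inv_word_concat[symmetric] relator_conj_inv_word intro: free_eq_inv_word)
qed

definition rel_eq :: "nat \<Rightarrow> 'a word \<Rightarrow> 'a word \<Rightarrow> bool" where
  "rel_eq k u v \<longleftrightarrow> area_le k (u @ inv_word v)"

lemma rel_eq_free_eq: "u \<approx> v \<Longrightarrow> rel_eq 0 u v"
proof -
  assume "u \<approx> v"
  then have "u @ inv_word v \<approx> v @ inv_word v"
    by (rule free_eq_append[OF _ free_eq_refl])
  also have "\<dots> \<approx> []"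
    by (rule append_inv_word_free_eq_Nil)
  finally show ?thesis
    unfolding rel_eq_def by (rule area_le_free_eq[OF area_le_Nil free_eq_sym])
qed

lemma rel_eq_trans [trans]: "rel_eq k u v \<Longrightarrow> rel_eq m v w \<Longrightarrow> rel_eq (k + m) u w"
proof -
  assume "rel_eq k u v" "rel_eq m v w"
  then have "area_le (k + m) (u @ inv_word v @ v @ inv_word w)"
    unfolding rel_eq_def using area_le_append by fastforce
  then show ?thesis
    unfolding rel_eq_def by (rule area_le_free_eq) (rule free_eq_cancel')
qed

lemma rel_eq_free_eq_trans [trans]: "rel_eq k u v \<Longrightarrow> v \<approx> w \<Longrightarrow> rel_eq k u w"
  using rel_eq_trans[OF _ rel_eq_free_eq] by fastforce

lemma free_eq_rel_eq_trans [trans]: "u \<approx> v \<Longrightarrow> rel_eq k v w \<Longrightarrow> rel_eq k u w"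
  using rel_eq_trans[OF rel_eq_free_eq] by fastforce

lemma rel_eq_sym: "rel_eq k u v \<Longrightarrow> rel_eq k v u"
  unfolding rel_eq_def using area_le_inv_word by fastforce

lemma rel_eq_mono: "rel_eq k u v \<Longrightarrow> k \<le> m \<Longrightarrow> rel_eq m u v"
  unfolding rel_eq_def by (rule area_le_mono)

lemma rel_eq_context:
  assumes "a \<in> words_over A" and "rel_eq k u v"
  shows "rel_eq k (a @ u @ b) (a @ v @ b)"
proof -
  have "area_le k (a @ (u @ inv_word v) @ inv_word a)"
    using assms unfolding rel_eq_def by (rule area_le_conj)
  moreover have "a @ u @ b @ inv_word b @ inv_word v @ inv_word a \<approx> a @ u @ inv_word v @ inv_word a"
    using free_eq_cancel[of "a @ u" b "inv_word v @ inv_word a"] by simp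
  ultimately show ?thesis
    unfolding rel_eq_def by (simp add: area_le_free_eq free_eq_commute)
qed

lemma area_le_commw_Nil: "area_le 0 (commw [] d)"
  using area_le_free_eq[OF area_le_Nil] append_inv_word_free_eq_Nil[of d]
  by (simp add: commw_def free_eq_commute)

lemma area_le_commw_append:
  assumes "u \<in> words_over A" and "area_le k (commw u d)" and "area_le m (commw v d)"
  shows "area_le (k + m) (commw (u @ v) d)"
proof -
  have "area_le (m + k) ((u @ commw v d @ inv_word u) @ commw u d)"
    using area_le_conj[OF assms(1,3)] assms(2) by (rule area_le_append)
  moreover have "(u @ commw v d @ inv_word u) @ commw u d
      \<approx> (u @ v @ d @ inv_word v) @ inv_word d @ d @ inv_word u @ inv_word d"
    using free_eq_cancel'[of "u @ v @ d @ inv_word v @ inv_word d" u "d @ inv_word u @ inv_word d"]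
    by (simp add: commw_def)
  moreover have "\<dots> \<approx> (u @ v @ d @ inv_word v) @ inv_word u @ inv_word d"
    by (rule free_eq_cancel')
  ultimately show ?thesis
    by (simp add: commw_def add.commute) (meson area_le_free_eq free_eq_trans)
qed

lemma area_le_commw_inv_word_left:
  assumes "u \<in> words_over A" and "area_le k (commw u d)"
  shows "area_le k (commw (inv_word u) d)"
proof -
  have "area_le k (inv_word u @ inv_word (commw u d) @ u)"
    using area_le_conj[of "inv_word u"] area_le_inv_word assms by fastforce
  moreover have "inv_word u @ d @ u @ inv_word d @ inv_word u @ u \<approx> inv_word u @ d @ u @ inv_word d"
    using free_eq_cancel'[of "inv_word u @ d @ u @ inv_word d" u "[]"] by simp
  ultimately show ?thesis
    by (simp add: commw_def) (meson area_le_free_eq)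
qed

lemma area_le_commw_inv_word_right:
  assumes "d \<in> words_over A" and "area_le k (commw u d)"
  shows "area_le k (commw u (inv_word d))"
proof -
  have "area_le k (inv_word d @ inv_word (commw u d) @ d)"
    using area_le_conj[of "inv_word d"] area_le_inv_word assms by fastforce
  moreover have "inv_word d @ d @ u @ inv_word d @ inv_word u @ d \<approx> u @ inv_word d @ inv_word u @ d"
    using free_eq_cancel'[of "[]" d "u @ inv_word d @ inv_word u @ d"] by simp
  ultimately show ?thesis
    by (simp add: commw_def) (meson area_le_free_eq)
qed

lemma area_le_commw_subst:
  assumes "\<And>i. i \<in> I \<Longrightarrow> s i \<in> words_over A" and "\<And>i. i \<in> I \<Longrightarrow> area_le k (commw (s i) d)"
  shows "w \<in> words_over I \<Longrightarrow> area_le (k * length w) (commw (subst s w) d)"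
proof (induction w)
  case Nil
  show ?case using area_le_commw_Nil by simp
next
  case (Cons p w)
  have i: "snd p \<in> I" and "w \<in> words_over I" using Cons.prems by simp_all
  have "subst_letter s p \<in> words_over A" using assms(1)[OF i] by (simp add: subst_letter_def)
  moreover have "area_le k (commw (subst_letter s p) d)"
    using assms(2)[OF i] area_le_commw_inv_word_left[OF assms(1)[OF i]] by (simp add: subst_letter_def)
  ultimately have "area_le (k + k * length w) (commw (subst_letter s p @ subst s w) d)"
    using Cons.IH[OF \<open>w \<in> words_over I\<close>] by (rule area_le_commw_append)
  then show ?case by simp
qed

lemma rel_eq_commute:
  assumes "a \<in> words_over A" and "area_le k (commw u d)"
  shows "rel_eq k (a @ d @ u @ b) (a @ u @ d @ b)"
proof -
  have "rel_eq k (d @ u) (u @ d)"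
    using area_le_inv_word[OF assms(2)] by (simp add: rel_eq_def commw_def)
  then show ?thesis
    using rel_eq_context[OF assms(1)] by fastforce
qed

definition word_power :: "'a word \<Rightarrow> int \<Rightarrow> 'a word" where
  "word_power d e = (if 0 \<le> e then concat (replicate (nat e) d)
     else concat (replicate (nat (- e)) (inv_word d)))"

lemma word_power_0 [simp]: "word_power d 0 = []"
  by (simp add: word_power_def)

lemma append_word_power: "d @ word_power d e \<approx> word_power d (e + 1)"
proof (cases "0 \<le> e")
  case True
  then have "nat (e + 1) = Suc (nat e)" by simp
  with True show ?thesis by (simp add: word_power_def)
next
  case False
  then obtain m where m: "nat (- e) = Suc m"
    by (cases "nat (- e)") auto
  then have "word_power d (e + 1) = concat (replicate m (inv_word d))"
    using False by (cases "e = -1") (simp_all add: word_power_def nat_diff_distrib')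
  with False m show ?thesis
    using free_eq_cancel[of "[]" d] by (simp add: word_power_def)
qed

lemma inv_word_append_word_power: "inv_word d @ word_power d e \<approx> word_power d (e - 1)"
proof (cases "0 < e")
  case False
  then have "nat (- (e - 1)) = Suc (nat (- e))" by simp
  with False show ?thesis by (simp add: word_power_def)
next
  case True
  then obtain m where m: "nat e = Suc m"
    by (cases "nat e") auto
  then have "word_power d (e - 1) = concat (replicate m d)"
    using True by (simp add: word_power_def nat_diff_distrib')
  with True m show ?thesis
    using free_eq_cancel'[of "[]" d] by (simp add: word_power_def)
qed

lemma rel_eq_subst_prepend:
  assumes s: "\<And>i. i \<in> I \<Longrightarrow> s i \<in> words_over A" and d: "d \<in> words_over A"
    and commute: "\<And>i. i \<in> I \<Longrightarrow> area_le 1 (commw (s i) d)" and j: "j \<in> I"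
  shows "w \<in> words_over I \<Longrightarrow>
    rel_eq ((length w)\<^sup>2) (subst (s(j := d @ s j)) w) (subst s w @ word_power d (exp_sum j w))"
proof (induction w)
  case Nil
  show ?case using rel_eq_free_eq[of "[]" "[]"] by simp
next
  case (Cons p w)
  define s' where "s' = s(j := d @ s j)"
  define L where "L = length w"
  define S where "S = subst s w"
  define T where "T = subst s' w"
  define e where "e = exp_sum j w"
  obtain b i where p: "p = (b, i)" by (cases p)
  have i: "i \<in> I" and w: "w \<in> words_over I" using Cons.prems p by auto
  have IH: "rel_eq (L\<^sup>2) T (S @ word_power d e)"
    using Cons.IH[OF w] unfolding L_def S_def T_def e_def s'_def .
  have sj: "s j \<in> words_over A" using s[OF j] .
  consider "i \<noteq> j" | "i = j" "b" | "i = j" "\<not> b" by blast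
  then have "rel_eq (L\<^sup>2 + (L + 1)) (subst s' (p # w)) (subst s (p # w) @ word_power d (exp_sum j (p # w)))"
  proof cases
    case 1
    have "subst_letter s p \<in> words_over A" using s[OF i] p by (simp add: subst_letter_def)
    from rel_eq_context[OF this IH, of "[]"]
    have "rel_eq (L\<^sup>2 + (L + 1)) (subst_letter s p @ T) (subst_letter s p @ S @ word_power d e)"
      by (simp add: rel_eq_mono)
    moreover have "subst_letter s' p = subst_letter s p" and "exp_sum j (p # w) = e"
      using 1 p by (simp_all add: subst_letter_def s'_def e_def exp_sum_Cons)
    ultimately show ?thesis by (simp add: T_def S_def)
  next
    case 2
    have "area_le (1 * length (p # w)) (commw (subst s (p # w)) d)"
      using s commute Cons.prems by (rule area_le_commw_subst)
    then have commute_pw: "area_le (L + 1) (commw (s j @ S) d)"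
      using 2 p by (simp add: subst_letter_def S_def L_def)
    have "rel_eq (L\<^sup>2) (d @ s j @ T) (d @ s j @ S @ word_power d e)"
      using rel_eq_context[of "d @ s j", OF _ IH, of "[]"] d sj by simp
    also have "rel_eq (L + 1) \<dots> (s j @ S @ d @ word_power d e)"
      using rel_eq_commute[OF _ commute_pw, of "[]" "word_power d e"] by simp
    also have "\<dots> \<approx> s j @ S @ word_power d (e + 1)"
      by (intro free_eq_append free_eq_refl append_word_power)
    finally show ?thesis
      using 2 p by (simp add: subst_letter_def s'_def T_def S_def e_def exp_sum_Cons add.commute)
  next
    case 3
    have "area_le (1 * L) (commw S d)"
      unfolding S_def L_def using s commute w by (rule area_le_commw_subst)
    then have commute_w: "area_le L (commw S (inv_word d))"
      using area_le_commw_inv_word_right[OF d] by simp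
    have "rel_eq (L\<^sup>2) (inv_word (s j) @ inv_word d @ T) (inv_word (s j) @ inv_word d @ S @ word_power d e)"
      using rel_eq_context[of "inv_word (s j) @ inv_word d", OF _ IH, of "[]"] d sj by simp
    also have "rel_eq L \<dots> (inv_word (s j) @ S @ inv_word d @ word_power d e)"
      using rel_eq_commute[OF _ commute_w, of "inv_word (s j)" "word_power d e"] sj by simp
    also have "\<dots> \<approx> inv_word (s j) @ S @ word_power d (e - 1)"
      by (intro free_eq_append free_eq_refl inv_word_append_word_power)
    finally show ?thesis
      using 3 p by (simp add: subst_letter_def s'_def T_def S_def e_def exp_sum_Cons)
        (erule rel_eq_mono, simp)
  qed
  then show ?case
    unfolding s'_def by (rule rel_eq_mono) (simp add: L_def power2_eq_square)
qed

end

section \<open>Relabelling the tuple \<Delta>\<close>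

definition delta :: "(nat \<Rightarrow> nat) \<Rightarrow> nat \<Rightarrow> (nat \<times> nat) word" where
  "delta \<tau> = (\<lambda>i. x (\<tau> i) i)"

definition admissible :: "nat \<Rightarrow> nat \<Rightarrow> (nat \<Rightarrow> nat) \<Rightarrow> bool" where
  "admissible n r \<tau> \<longleftrightarrow> inj_on \<tau> {1..r} \<and> \<tau> ` {1..r} \<subseteq> {1..n-1}"

definition disagreement :: "nat \<Rightarrow> (nat \<Rightarrow> nat) \<Rightarrow> (nat \<Rightarrow> nat) \<Rightarrow> nat set" where
  "disagreement r \<tau> \<sigma> = {i \<in> {1..r}. \<tau> i \<noteq> \<sigma> i}"

lemma finite_disagreement [simp]: "finite (disagreement r \<tau> \<sigma>)"
  by (simp add: disagreement_def)

lemma admissible_range: "admissible n r \<tau> \<Longrightarrow> i \<in> {1..r} \<Longrightarrow> \<tau> i \<in> {1..n-1}"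
  unfolding admissible_def by blast

lemma admissible_distinct:
  "admissible n r \<tau> \<Longrightarrow> i \<in> {1..r} \<Longrightarrow> j \<in> {1..r} \<Longrightarrow> i \<noteq> j \<Longrightarrow> \<tau> i \<noteq> \<tau> j"
  unfolding admissible_def by (meson inj_on_contraD)

lemma admissible_fun_upd:
  assumes "admissible n r \<tau>" and "\<beta> \<in> {1..n-1}" and "\<beta> \<notin> \<tau> ` {1..r}"
  shows "admissible n r (\<tau>(j := \<beta>))"
  using assms inj_on_fun_updI[of \<tau> "{1..r}" \<beta> j] unfolding admissible_def by auto

lemma exists_unused_index:
  fixes n r :: nat and \<tau> :: "nat \<Rightarrow> nat"
  assumes "r + 2 \<le> n"
  obtains \<beta> where "\<beta> \<in> {1..n-1}" and "\<beta> \<notin> \<tau> ` {1..r}"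
proof -
  have "card (\<tau> ` {1..r}) < card {1..n-1}"
    using card_image_le[of "{1..r}" \<tau>] assms by simp
  then have "\<not> {1..n-1} \<subseteq> \<tau> ` {1..r}"
    by (meson card_mono finite_imageI finite_atLeastAtMost not_le)
  then show ?thesis using that by blast
qed

context
  fixes n r :: nat
begin

interpretation group_presentation "Xset n r" "Rel n r" .

lemma x_in_words_over: "\<alpha> \<in> {1..n-1} \<Longrightarrow> i \<in> {1..r} \<Longrightarrow> x \<alpha> i \<in> words_over (Xset n r)"
  by (simp add: x_def gen_def Xset_def)

lemma area_le_commw_x_x_inv:
  assumes \<tau>: "admissible n r \<tau>" and i: "i \<in> {1..r}" and j: "j \<in> {1..r}"
    and \<beta>: "\<beta> \<in> {1..n-1}" "\<beta> \<notin> \<tau> ` {1..r}"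
  shows "area_le 1 (commw (x (\<tau> i) i) (x \<beta> j @ inv_word (x (\<tau> j) j)))"
proof (cases "i = j")
  case True
  have "\<tau> j \<in> {1..n-1}" and "\<tau> j \<noteq> \<beta>"
    using admissible_range[OF \<tau> j] \<beta>(2) j by auto
  then have "commw (x (\<tau> j) j) (x \<beta> j) \<in> R1 n r"
    unfolding R1_def using \<beta>(1) j by blast
  then have "commw (x (\<tau> j) j) (x \<beta> j) \<in> Rel n r"
    by (simp add: Rel_def)
  then show ?thesis
    using True area_le_free_eq[OF area_le_relator free_eq_sym[OF commw_append_inv_word_free_eq]]
    by blast
next
  case False
  have "\<tau> i \<in> {1..n-1}" "\<tau> j \<in> {1..n-1}" "\<tau> i \<noteq> \<tau> j"
    using admissible_range[OF \<tau>] admissible_distinct[OF \<tau>] i j False by simp_all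
  moreover have "\<tau> i \<noteq> \<beta>" "\<beta> \<noteq> \<tau> j"
    using \<beta>(2) i j by auto
  ultimately have "commw (x (\<tau> i) i) (x \<beta> j @ inv_word (x (\<tau> j) j)) \<in> R2 n r"
    unfolding R2_def using \<beta>(1) i j False by blast
  then have "commw (x (\<tau> i) i) (x \<beta> j @ inv_word (x (\<tau> j) j)) \<in> Rel n r"
    by (simp add: Rel_def)
  then show ?thesis by (rule area_le_relator)
qed

lemma rel_eq_relabel_one:
  assumes \<tau>: "admissible n r \<tau>" and j: "j \<in> {1..r}"
    and \<beta>: "\<beta> \<in> {1..n-1}" "\<beta> \<notin> \<tau> ` {1..r}" and w: "w \<in> commutator_subgroup r"
  shows "rel_eq ((word_length w)\<^sup>2) (subst (delta (\<tau>(j := \<beta>))) w) (subst (delta \<tau>) w)"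
proof -
  define d where "d = x \<beta> j @ inv_word (x (\<tau> j) j)"
  define s' where "s' = (delta \<tau>)(j := d @ delta \<tau> j)"
  define v where "v = reduce w"
  have s: "delta \<tau> i \<in> words_over (Xset n r)" if "i \<in> {1..r}" for i
    using x_in_words_over[OF admissible_range[OF \<tau> that] that] by (simp add: delta_def)
  have "d \<in> words_over (Xset n r)"
    unfolding d_def using x_in_words_over[OF \<beta>(1) j] s[OF j] by (simp add: delta_def)
  moreover have "area_le 1 (commw (delta \<tau> i) d)" if "i \<in> {1..r}" for i
    unfolding delta_def d_def using area_le_commw_x_x_inv[OF \<tau> that j \<beta>] .
  moreover have v: "v \<in> words_over {1..r}"
    using w unfolding v_def commutator_subgroup_def by (auto intro: words_over_reduce)
  ultimately have prepend: "rel_eq ((length v)\<^sup>2) (subst s' v) (subst (delta \<tau>) v @ word_power d (exp_sum j v))"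
    unfolding s'_def using s j by (intro rel_eq_subst_prepend)
  have "subst (delta (\<tau>(j := \<beta>))) w \<approx> subst s' w"
    using free_eq_cancel'[of "x \<beta> j" "x (\<tau> j) j" "[]"]
    by (intro subst_cong_free_eq) (simp add: s'_def d_def delta_def free_eq_commute)
  also have "\<dots> \<approx> subst s' v"
    unfolding v_def by (rule free_eq_sym[OF subst_reduce_free_eq])
  also note prepend
  also have "exp_sum j v = 0"
    unfolding v_def using exp_sum_commutator_subgroup[OF w] by (simp add: exp_sum_reduce)
  also have "subst (delta \<tau>) v @ word_power d 0 \<approx> subst (delta \<tau>) w"
    unfolding v_def using subst_reduce_free_eq by simp
  finally show ?thesis
    unfolding word_length_def v_def .
qed

lemma rel_eq_relabel_step:
  assumes n: "r + 2 \<le> n" and \<tau>: "admissible n r \<tau>" and \<sigma>: "admissible n r \<sigma>"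
    and j: "j \<in> {1..r}" "\<tau> j \<noteq> \<sigma> j" and w: "w \<in> commutator_subgroup r"
  obtains \<tau>' where "admissible n r \<tau>'"
    and "disagreement r \<tau>' \<sigma> \<subseteq> disagreement r \<tau> \<sigma> - {j}"
    and "rel_eq (2 * (word_length w)\<^sup>2) (subst (delta \<tau>) w) (subst (delta \<tau>') w)"
proof (cases "\<sigma> j \<in> \<tau> ` {1..r}")
  case False
  have "admissible n r (\<tau>(j := \<sigma> j))"
    using admissible_fun_upd[OF \<tau> admissible_range[OF \<sigma> j(1)] False] .
  moreover have "disagreement r (\<tau>(j := \<sigma> j)) \<sigma> \<subseteq> disagreement r \<tau> \<sigma> - {j}"
    by (auto simp: disagreement_def)
  moreover have "rel_eq (2 * (word_length w)\<^sup>2) (subst (delta \<tau>) w) (subst (delta (\<tau>(j := \<sigma> j))) w)"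
    using rel_eq_sym[OF rel_eq_relabel_one[OF \<tau> j(1) admissible_range[OF \<sigma> j(1)] False w]]
    by (rule rel_eq_mono) simp
  ultimately show ?thesis by (rule that)
next
  case True
  \<comment> \<open>\<sigma> j is already taken by \<tau> k, so first move \<tau> k to an unused index\<close>
  then obtain k where k: "k \<in> {1..r}" "\<tau> k = \<sigma> j" by auto
  with j have "k \<noteq> j" by auto
  obtain \<beta> where \<beta>: "\<beta> \<in> {1..n-1}" "\<beta> \<notin> \<tau> ` {1..r}"
    using exists_unused_index[OF n] by blast
  define \<tau>1 where "\<tau>1 = \<tau>(k := \<beta>)"
  have \<tau>1: "admissible n r \<tau>1"
    unfolding \<tau>1_def using \<tau> \<beta> by (rule admissible_fun_upd)
  have "\<sigma> j \<notin> \<tau>1 ` {1..r}"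
  proof
    assume "\<sigma> j \<in> \<tau>1 ` {1..r}"
    then obtain i where "i \<in> {1..r}" "\<tau>1 i = \<tau> k" using k by auto
    then show False
      using k(1) \<beta>(2) admissible_distinct[OF \<tau>] by (cases "i = k") (auto simp: \<tau>1_def)
  qed
  then have "admissible n r (\<tau>1(j := \<sigma> j))"
    using admissible_fun_upd[OF \<tau>1 admissible_range[OF \<sigma> j(1)]] by blast
  moreover have "\<sigma> k \<noteq> \<sigma> j"
    using admissible_distinct[OF \<sigma> k(1) j(1) \<open>k \<noteq> j\<close>] .
  then have "disagreement r (\<tau>1(j := \<sigma> j)) \<sigma> \<subseteq> disagreement r \<tau> \<sigma> - {j}"
    using k by (auto simp: \<tau>1_def disagreement_def)
  moreover have "rel_eq ((word_length w)\<^sup>2 + (word_length w)\<^sup>2)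
      (subst (delta \<tau>) w) (subst (delta (\<tau>1(j := \<sigma> j))) w)"
    using rel_eq_sym[OF rel_eq_relabel_one[OF \<tau> k(1) \<beta> w]]
      rel_eq_sym[OF rel_eq_relabel_one[OF \<tau>1 j(1) admissible_range[OF \<sigma> j(1)] \<open>\<sigma> j \<notin> \<tau>1 ` {1..r}\<close> w]]
    unfolding \<tau>1_def by (rule rel_eq_trans)
  then have "rel_eq (2 * (word_length w)\<^sup>2) (subst (delta \<tau>) w) (subst (delta (\<tau>1(j := \<sigma> j))) w)"
    by (simp add: mult_2)
  ultimately show ?thesis by (rule that)
qed

lemma subst_delta_cong:
  assumes "w \<in> words_over {1..r}" and "disagreement r \<tau> \<sigma> = {}"
  shows "subst (delta \<tau>) w = subst (delta \<sigma>) w"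
  using assms by (intro subst_cong) (auto simp: words_over_def disagreement_def delta_def)

lemma rel_eq_relabel:
  assumes n: "r + 2 \<le> n" and \<sigma>: "admissible n r \<sigma>" and w: "w \<in> commutator_subgroup r"
  shows "admissible n r \<tau> \<Longrightarrow> card (disagreement r \<tau> \<sigma>) \<le> N \<Longrightarrow>
    rel_eq (2 * N * (word_length w)\<^sup>2) (subst (delta \<tau>) w) (subst (delta \<sigma>) w)"
proof (induction N arbitrary: \<tau>)
  case 0
  then have "disagreement r \<tau> \<sigma> = {}" by simp
  moreover have "w \<in> words_over {1..r}" using w by (simp add: commutator_subgroup_def)
  ultimately show ?case by (simp add: subst_delta_cong rel_eq_free_eq)
next
  case (Suc N)
  show ?case
  proof (cases "card (disagreement r \<tau> \<sigma>) \<le> N")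
    case True
    then show ?thesis using rel_eq_mono[OF Suc.IH[OF Suc.prems(1) True]] by simp
  next
    case False
    then have "disagreement r \<tau> \<sigma> \<noteq> {}" by auto
    then obtain j where j: "j \<in> {1..r}" "\<tau> j \<noteq> \<sigma> j"
      by (auto simp: disagreement_def)
    obtain \<tau>' where \<tau>': "admissible n r \<tau>'"
      and less: "disagreement r \<tau>' \<sigma> \<subseteq> disagreement r \<tau> \<sigma> - {j}"
      and step: "rel_eq (2 * (word_length w)\<^sup>2) (subst (delta \<tau>) w) (subst (delta \<tau>') w)"
      using rel_eq_relabel_step[OF n Suc.prems(1) \<sigma> j w] .
    have "card (disagreement r \<tau>' \<sigma>) \<le> card (disagreement r \<tau> \<sigma> - {j})"
      using less by (intro card_mono) auto
    also have "\<dots> \<le> N"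
      using Suc.prems(2) j by (simp add: card_Diff_singleton disagreement_def)
    finally have "rel_eq (2 * N * (word_length w)\<^sup>2) (subst (delta \<tau>') w) (subst (delta \<sigma>) w)"
      by (rule Suc.IH[OF \<tau>'])
    with step have "rel_eq (2 * (word_length w)\<^sup>2 + 2 * N * (word_length w)\<^sup>2)
        (subst (delta \<tau>) w) (subst (delta \<sigma>) w)"
      by (rule rel_eq_trans)
    then show ?thesis by (simp add: algebra_simps)
  qed
qed

lemma Area_le_if_area_le:
  assumes "area_le k u"
  shows "Area n r u \<le> ereal (real k)"
proof -
  have "conj_rel n r = relator_conj"
    by (auto simp: fun_eq_iff conj_rel_def relator_conj_def)
  with assms obtain cs where "length cs \<le> k" "\<forall>c \<in> set cs. conj_rel n r c" "reduce u = reduce (concat cs)"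
    unfolding area_le_def free_eq_def by auto
  then show ?thesis
    unfolding Area_def by (intro Inf_lower2[of "ereal (real (length cs))"]) auto
qed

lemma Area_relabel_le:
  assumes "r + 2 \<le> n" and "admissible n r \<tau>" and "admissible n r \<sigma>"
    and "w \<in> commutator_subgroup r"
  shows "Area n r (subst (delta \<tau>) w @ inv_word (subst (delta \<sigma>) w))
    \<le> ereal (real (2 * r * (word_length w)\<^sup>2))"
proof -
  have "card (disagreement r \<tau> \<sigma>) \<le> card {1..r}"
    by (rule card_mono) (auto simp: disagreement_def)
  then have "rel_eq (2 * r * (word_length w)\<^sup>2) (subst (delta \<tau>) w) (subst (delta \<sigma>) w)"
    using rel_eq_relabel[OF assms(1,3,4,2)] by simp
  then show ?thesis
    unfolding rel_eq_def by (rule Area_le_if_area_le)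
qed

end

theorem lemma3p12:
  fixes n r :: nat and \<sigma> :: "nat \<Rightarrow> nat"
  assumes "2 \<le> r + 2" and "r + 2 \<le> n"
    and "inj_on \<sigma> {1..r}" and "\<sigma> ` {1..r} \<subseteq> {1..n-1}"
  shows "\<exists>C > (0::real). \<forall>w \<in> commutator_subgroup r.
    Area n r (subst (\<lambda>i. x i i) w @ inv_word (subst (\<lambda>i. x (\<sigma> i) i) w))
      \<le> ereal (C * real (word_length w) ^ 2)"
proof (intro exI[of _ "2 * real r + 1"] conjI ballI)
  fix w assume w: "w \<in> commutator_subgroup r"
  have "admissible n r (\<lambda>i. i)" and "admissible n r \<sigma>"
    using assms(2-4) by (auto simp: admissible_def)
  from Area_relabel_le[OF assms(2) this w]
  have "Area n r (subst (\<lambda>i. x i i) w @ inv_word (subst (\<lambda>i. x (\<sigma> i) i) w))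
      \<le> ereal (real (2 * r * (word_length w)\<^sup>2))"
    by (simp add: delta_def)
  also have "\<dots> \<le> ereal ((2 * real r + 1) * real (word_length w) ^ 2)"
    by (simp add: algebra_simps)
  finally show "Area n r (subst (\<lambda>i. x i i) w @ inv_word (subst (\<lambda>i. x (\<sigma> i) i) w))
      \<le> ereal ((2 * real r + 1) * real (word_length w) ^ 2)" .
qed simp

end
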